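(* Let $G \ne K_4$ be a connected, claw-free, cubic graph that is not a diamond-necklace $N_k$ for any $k\ge 2$. Then there exists a triangle-unit $T'$ of $G$ such that the graph $G - V(T')$ has at most two components.
   Context: A graph is claw-free if it has no induced subgraph isomorphic to $K_{1,3}$; it is cubic if every vertex has degree $3$. A diamond is an induced subgraph isomorphic to $K_4$ minus one edge. For a connected, claw-free, cubic graph $G\neq K_4$, the vertex set $V(G)$ can be uniquely partitioned into sets each of which induces a triangle or a diamond in $G$; the parts are called units, a triangle-unit being a part inducing a triangle. Diamond-necklace: for $k\ge 2$, take $k$ disjoint diamonds $D_1,\dots,D_k$ with $V(D_i)=\{a_i,b_i,c_i,d_i\}$ where $a_ib_i$ is the missing edge, and add the edges $a_ib_{i+1}$ for $i\in\{1,\dots,k-1\}$ and the edge $a_kb_1$; the result is $N_k$. *)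

theory Defs
  imports Main
begin

definition simple_graph :: "'a set \<Rightarrow> ('a \<Rightarrow> 'a \<Rightarrow> bool) \<Rightarrow> bool" where
  "simple_graph V E \<longleftrightarrow> finite V \<and> (\<forall>x y. E x y \<longrightarrow> x \<in> V \<and> y \<in> V)
     \<and> (\<forall>x y. E x y \<longrightarrow> E y x) \<and> (\<forall>x. \<not> E x x)"

definition neighbours :: "'a set \<Rightarrow> ('a \<Rightarrow> 'a \<Rightarrow> bool) \<Rightarrow> 'a \<Rightarrow> 'a set" where
  "neighbours V E x = {y \<in> V. E x y}"

definition cubic :: "'a set \<Rightarrow> ('a \<Rightarrow> 'a \<Rightarrow> bool) \<Rightarrow> bool" where
  "cubic V E \<longleftrightarrow> (\<forall>x\<in>V. card (neighbours V E x) = 3)"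

definition claw_free :: "'a set \<Rightarrow> ('a \<Rightarrow> 'a \<Rightarrow> bool) \<Rightarrow> bool" where
  "claw_free V E \<longleftrightarrow> \<not> (\<exists>x\<in>V. \<exists>a\<in>V. \<exists>b\<in>V. \<exists>c\<in>V.
      a \<noteq> b \<and> a \<noteq> c \<and> b \<noteq> c \<and> E x a \<and> E x b \<and> E x c
      \<and> \<not> E a b \<and> \<not> E a c \<and> \<not> E b c)"

definition restr :: "('a \<Rightarrow> 'a \<Rightarrow> bool) \<Rightarrow> 'a set \<Rightarrow> 'a \<Rightarrow> 'a \<Rightarrow> bool" where
  "restr E S x y \<longleftrightarrow> E x y \<and> x \<in> S \<and> y \<in> S"

definition connected_graph :: "'a set \<Rightarrow> ('a \<Rightarrow> 'a \<Rightarrow> bool) \<Rightarrow> bool" where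
  "connected_graph V E \<longleftrightarrow> V \<noteq> {} \<and> (\<forall>x\<in>V. \<forall>y\<in>V. (restr E V)\<^sup>*\<^sup>* x y)"

definition components_minus :: "'a set \<Rightarrow> ('a \<Rightarrow> 'a \<Rightarrow> bool) \<Rightarrow> 'a set \<Rightarrow> 'a set set" where
  "components_minus V E S = (\<lambda>x. {y \<in> V - S. (restr E (V - S))\<^sup>*\<^sup>* x y}) ` (V - S)"

definition induces_triangle :: "'a set \<Rightarrow> ('a \<Rightarrow> 'a \<Rightarrow> bool) \<Rightarrow> 'a set \<Rightarrow> bool" where
  "induces_triangle V E S \<longleftrightarrow> S \<subseteq> V \<and> card S = 3 \<and> (\<forall>x\<in>S. \<forall>y\<in>S. x \<noteq> y \<longrightarrow> E x y)"

definition induces_diamond :: "'a set \<Rightarrow> ('a \<Rightarrow> 'a \<Rightarrow> bool) \<Rightarrow> 'a set \<Rightarrow> bool" where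
  "induces_diamond V E S \<longleftrightarrow> S \<subseteq> V \<and> card S = 4 \<and>
     (\<exists>a\<in>S. \<exists>b\<in>S. a \<noteq> b \<and> \<not> E a b \<and>
        (\<forall>x\<in>S. \<forall>y\<in>S. x \<noteq> y \<and> {x, y} \<noteq> {a, b} \<longrightarrow> E x y))"

definition unit_partition :: "'a set \<Rightarrow> ('a \<Rightarrow> 'a \<Rightarrow> bool) \<Rightarrow> 'a set set \<Rightarrow> bool" where
  "unit_partition V E P \<longleftrightarrow> \<Union>P = V \<and> (\<forall>A\<in>P. \<forall>B\<in>P. A \<noteq> B \<longrightarrow> A \<inter> B = {})
     \<and> (\<forall>A\<in>P. induces_triangle V E A \<or> induces_diamond V E A)"

text \<open>A triangle-unit: a part of the (unique) unit partition inducing a triangle.\<close>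
definition triangle_unit :: "'a set \<Rightarrow> ('a \<Rightarrow> 'a \<Rightarrow> bool) \<Rightarrow> 'a set \<Rightarrow> bool" where
  "triangle_unit V E T \<longleftrightarrow> (\<exists>P. unit_partition V E P \<and> T \<in> P \<and> induces_triangle V E T)"

definition graph_iso :: "'a set \<Rightarrow> ('a \<Rightarrow> 'a \<Rightarrow> bool) \<Rightarrow> 'b set \<Rightarrow> ('b \<Rightarrow> 'b \<Rightarrow> bool) \<Rightarrow> bool" where
  "graph_iso V E W F \<longleftrightarrow> (\<exists>f. bij_betw f V W \<and> (\<forall>x\<in>V. \<forall>y\<in>V. E x y \<longleftrightarrow> F (f x) (f y)))"

definition is_K4 :: "'a set \<Rightarrow> ('a \<Rightarrow> 'a \<Rightarrow> bool) \<Rightarrow> bool" where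
  "is_K4 V E \<longleftrightarrow> card V = 4 \<and> (\<forall>x\<in>V. \<forall>y\<in>V. x \<noteq> y \<longrightarrow> E x y)"

text \<open>Diamond-necklace N_k: vertex (i,j), i < k the diamond index (0-based),
  j = 0,1,2,3 standing for a_i, b_i, c_i, d_i; a_i b_i is the missing edge;
  extra edges a_i b_{(i+1) mod k}.\<close>
definition necklace_V :: "nat \<Rightarrow> (nat \<times> nat) set" where
  "necklace_V k = {(i, j). i < k \<and> j < 4}"

definition necklace_E :: "nat \<Rightarrow> nat \<times> nat \<Rightarrow> nat \<times> nat \<Rightarrow> bool" where
  "necklace_E k u v \<longleftrightarrow> u \<in> necklace_V k \<and> v \<in> necklace_V k \<and>
     ((fst u = fst v \<and> snd u \<noteq> snd v \<and> {snd u, snd v} \<noteq> {0, 1})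
      \<or> (snd u = 0 \<and> snd v = 1 \<and> fst v = (fst u + 1) mod k)
      \<or> (snd u = 1 \<and> snd v = 0 \<and> fst u = (fst v + 1) mod k))"

end

(*
  Every vertex of a connected claw-free cubic graph G other than K4 lies in a triangle, a vertex
  in two triangles lies in a diamond, and two diamonds sharing a vertex coincide; so the units
  are the diamonds together with the triangles meeting no diamond.

  If there is no triangle unit, every vertex lies in a diamond, each end of a diamond has exactly
  one neighbour outside it, which is again an end, and following end, partner end, outside
  neighbour, ... around the graph exhibits G as a necklace N_k.

  Otherwise suppose every triangle unit T leaves at least three components. Every component of
  G - T contains the outside neighbour of some vertex of T, so each component is attached to T
  by a single edge, and degree counting makes its order odd. As diamonds have four vertices, it
  contains a vertex outside all diamonds and hence a triangle unit T'. A component of G - T'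
  avoiding the attachment vertex of T lies strictly inside the component of G - T, so the
  sizes of components would descend forever.
*)

theory Submission
  imports Defs
begin

definition diamond :: "('a \<Rightarrow> 'a \<Rightarrow> bool) \<Rightarrow> 'a \<Rightarrow> 'a \<Rightarrow> 'a \<Rightarrow> 'a \<Rightarrow> bool" where
  "diamond E a b c d \<longleftrightarrow> a \<noteq> b \<and> a \<noteq> c \<and> a \<noteq> d \<and> b \<noteq> c \<and> b \<noteq> d \<and> c \<noteq> d \<and>
     \<not> E a b \<and> E a c \<and> E a d \<and> E b c \<and> E b d \<and> E c d"

definition triangle :: "('a \<Rightarrow> 'a \<Rightarrow> bool) \<Rightarrow> 'a \<Rightarrow> 'a \<Rightarrow> 'a \<Rightarrow> bool" where
  "triangle E x y z \<longleftrightarrow> x \<noteq> y \<and> x \<noteq> z \<and> y \<noteq> z \<and> E x y \<and> E x z \<and> E y z"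

locale sgraph =
  fixes V :: "'a set" and E :: "'a \<Rightarrow> 'a \<Rightarrow> bool"
  assumes simple: "simple_graph V E"
begin

lemma finite_V: "finite V"
  using simple by (simp add: simple_graph_def)

lemma adj_sym: "E x y \<Longrightarrow> E y x"
  using simple by (simp add: simple_graph_def)

lemma adj_in_V: "E x y \<Longrightarrow> x \<in> V" "E x y \<Longrightarrow> y \<in> V"
  using simple by (simp_all add: simple_graph_def)

lemma adj_irrefl: "\<not> E x x"
  using simple by (simp add: simple_graph_def)

lemma adj_neq: "E x y \<Longrightarrow> x \<noteq> y"
  using adj_irrefl by blast

lemma even_card_inner_pairs: "finite S \<Longrightarrow> even (card {(a, b). a \<in> S \<and> b \<in> S \<and> E a b})"
proof (induction S rule: finite_induct)
  case empty
  then show ?case by simp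
next
  case (insert z S)
  let ?P = "\<lambda>S. {(a, b). a \<in> S \<and> b \<in> S \<and> E a b}"
  let ?N = "{b \<in> S. E z b}"
  let ?L = "(\<lambda>b. (z, b)) ` ?N" and ?R = "(\<lambda>a. (a, z)) ` ?N"
  have split: "?P (insert z S) = ?P S \<union> (?L \<union> ?R)"
    using adj_irrefl adj_sym by auto
  have "finite (?P S)"
    by (rule finite_subset[of _ "S \<times> S"]) (use insert in auto)
  moreover have "?P S \<inter> (?L \<union> ?R) = {}" "?L \<inter> ?R = {}"
    using insert(2) adj_irrefl by auto
  moreover have "card ?L = card ?N" "card ?R = card ?N"
    by (auto intro: card_image simp: inj_on_def)
  ultimately have "card (?P (insert z S)) = card (?P S) + 2 * card ?N"
    unfolding split using insert(1) by (simp add: card_Un_disjoint)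
  with insert(3) show ?case by simp
qed

definition component :: "'a set \<Rightarrow> 'a \<Rightarrow> 'a set" where
  "component S v = {y \<in> V - S. (restr E (V - S))\<^sup>*\<^sup>* v y}"

lemma components_minus_eq: "components_minus V E S = component S ` (V - S)"
  unfolding components_minus_def component_def by simp

lemma restr_rtranclp_sym: "(restr E A)\<^sup>*\<^sup>* a b \<Longrightarrow> (restr E A)\<^sup>*\<^sup>* b a"
proof (induction rule: rtranclp_induct)
  case (step y z)
  then have "restr E A z y"
    using adj_sym unfolding restr_def by blast
  with step(3) show ?case
    by (meson converse_rtranclp_into_rtranclp)
qed simp

lemma restr_rtranclp_mono: "(restr E A)\<^sup>*\<^sup>* u w \<Longrightarrow> A \<subseteq> B \<Longrightarrow> (restr E B)\<^sup>*\<^sup>* u w"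
  by (erule rtranclp_mono[THEN predicate2D, rotated]) (auto simp: restr_def)

lemma component_subset: "component S v \<subseteq> V - S"
  unfolding component_def by blast

lemma component_self: "v \<in> V - S \<Longrightarrow> v \<in> component S v"
  unfolding component_def by simp

lemma component_eq_if_path:
  assumes "(restr E (V - S))\<^sup>*\<^sup>* v w"
  shows "component S v = component S w"
  unfolding component_def using assms restr_rtranclp_sym[OF assms]
  by (auto intro: rtranclp_trans)

lemma component_eq_if_mem: "u \<in> component S v \<Longrightarrow> component S u = component S v"
  using component_eq_if_path[of S v u] by (auto simp: component_def)

lemma component_adj:
  assumes "u \<in> component S v" "E u w" "w \<notin> S"
  shows "w \<in> component S v"
proof -
  have "restr E (V - S) u w"
    using assms adj_in_V(2)[OF assms(2)] component_subset unfolding restr_def by blast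
  with assms(1) show ?thesis
    using adj_in_V(2)[OF assms(2)] assms(3) unfolding component_def
    by (auto intro: rtranclp.rtrancl_into_rtrancl)
qed

lemma path_within_component:
  assumes "(restr E (V - S))\<^sup>*\<^sup>* u w"
  shows "(restr E (component S u))\<^sup>*\<^sup>* u w"
  using assms
proof (induction rule: rtranclp_induct)
  case (step y z)
  have "y \<in> component S u" "z \<in> component S u"
    using step unfolding component_def restr_def by (auto intro: rtranclp.rtrancl_into_rtrancl)
  then have "restr E (component S u) y z"
    using step(2) unfolding restr_def by blast
  with step(3) show ?case
    by (auto intro: rtranclp.rtrancl_into_rtrancl)
qed simp

lemma path_leaves_through_edge:
  assumes "(restr E V)\<^sup>*\<^sup>* w u" "w \<in> V - S" "u \<in> S"
  shows "\<exists>w' t. (restr E (V - S))\<^sup>*\<^sup>* w w' \<and> w' \<in> V - S \<and> t \<in> S \<and> E w' t"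
  using assms
proof (induction rule: converse_rtranclp_induct)
  case (step y z)
  show ?case
  proof (cases "z \<in> S")
    case True
    with step show ?thesis unfolding restr_def by blast
  next
    case False
    then have z: "z \<in> V - S"
      using step(1) unfolding restr_def by blast
    with step obtain w' t where "(restr E (V - S))\<^sup>*\<^sup>* z w'" "w' \<in> V - S" "t \<in> S" "E w' t"
      by blast
    moreover have "restr E (V - S) y z"
      using step(1,4) z unfolding restr_def by blast
    ultimately show ?thesis
      by (meson converse_rtranclp_into_rtranclp)
  qed
qed blast

end

locale claw_free_cubic = sgraph +
  assumes connected: "connected_graph V E"
    and claw_free: "claw_free V E"
    and cubic: "cubic V E"
    and not_K4: "\<not> is_K4 V E"
begin

lemma finite_neighbours: "finite (neighbours V E x)"
  using finite_V by (simp add: neighbours_def)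

lemma card_neighbours: "x \<in> V \<Longrightarrow> card (neighbours V E x) = 3"
  using cubic by (simp add: cubic_def)

lemma neighboursE:
  assumes "x \<in> V"
  obtains a b c where "a \<noteq> b" "a \<noteq> c" "b \<noteq> c" "E x a" "E x b" "E x c"
    "\<And>z. E x z \<Longrightarrow> z = a \<or> z = b \<or> z = c"
proof -
  obtain a b c where abc: "neighbours V E x = {a, b, c}" "a \<noteq> b" "b \<noteq> c" "a \<noteq> c"
    using card_neighbours[OF assms] by (auto simp: card_3_iff)
  have "E x a" "E x b" "E x c"
    using abc(1) unfolding neighbours_def by blast+
  moreover have "z = a \<or> z = b \<or> z = c" if "E x z" for z
  proof -
    have "z \<in> neighbours V E x"
      using that adj_in_V(2) by (simp add: neighbours_def)
    with abc(1) show ?thesis by blast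
  qed
  ultimately show ?thesis
    using that abc by blast
qed

lemma neighbour_cases:
  assumes "E x a" "E x b" "E x c" "a \<noteq> b" "a \<noteq> c" "b \<noteq> c" "E x z"
  shows "z = a \<or> z = b \<or> z = c"
proof -
  have sub: "{a, b, c} \<subseteq> neighbours V E x"
    using assms adj_in_V(2) by (auto simp: neighbours_def)
  have "card {a, b, c} = card (neighbours V E x)"
    using assms card_neighbours[OF adj_in_V(1)[OF assms(1)]] by simp
  then have "{a, b, c} = neighbours V E x"
    using card_subset_eq[OF finite_neighbours sub] by simp
  moreover have "z \<in> neighbours V E x"
    using assms(7) adj_in_V(2) by (simp add: neighbours_def)
  ultimately show ?thesis
    by blast
qed

lemma third_neighbourE:
  assumes "E a c" "E a d" "c \<noteq> d"
  obtains x where "E a x" "x \<noteq> c" "x \<noteq> d" "\<And>z. E a z \<Longrightarrow> z = c \<or> z = d \<or> z = x"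
proof -
  have sub: "{c, d} \<subseteq> neighbours V E a"
    using assms adj_in_V(2) by (auto simp: neighbours_def)
  have "card {c, d} = 2"
    using assms(3) by simp
  then have "{c, d} \<noteq> neighbours V E a"
    using card_neighbours[OF adj_in_V(1)[OF assms(1)]] by auto
  then obtain x where x: "x \<in> neighbours V E a" "x \<notin> {c, d}"
    using sub by blast
  then have "E a x"
    by (simp add: neighbours_def)
  moreover have "z = c \<or> z = d \<or> z = x" if "E a z" for z
    using neighbour_cases[of a c d x z] assms x(2) \<open>E a x\<close> that by blast
  ultimately show ?thesis
    using that x(2) by blast
qed

lemma adj_closed_eq_V:
  assumes "S \<subseteq> V" "s \<in> S" "\<And>x y. x \<in> S \<Longrightarrow> E x y \<Longrightarrow> y \<in> S"
  shows "S = V"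
proof -
  have "v \<in> S" if "v \<in> V" for v
  proof -
    have "(restr E V)\<^sup>*\<^sup>* s v"
      using connected assms(1,2) that by (auto simp: connected_graph_def)
    then show ?thesis
      by (induction rule: rtranclp_induct) (use assms in \<open>auto simp: restr_def\<close>)
  qed
  with assms(1) show ?thesis by blast
qed

lemma no_K4_subgraph:
  assumes "a \<noteq> b" "a \<noteq> c" "a \<noteq> d" "b \<noteq> c" "b \<noteq> d" "c \<noteq> d"
    and "E a b" "E a c" "E a d" "E b c" "E b d" "E c d"
  shows False
proof -
  have "y \<in> {a, b, c, d}" if "x \<in> {a, b, c, d}" "E x y" for x y
    using that neighbour_cases[of a b c d y] neighbour_cases[of b a c d y]
      neighbour_cases[of c a b d y] neighbour_cases[of d a b c y] assms adj_sym
    by (metis insert_iff singletonD)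
  then have "{a, b, c, d} = V"
    by (intro adj_closed_eq_V) (use assms adj_in_V in auto)
  then have "is_K4 V E"
    using assms adj_sym unfolding is_K4_def by auto
  with not_K4 show False by blast
qed

section \<open>Diamonds and triangles\<close>

lemma diamond_swap_ends: "diamond E a b c d \<Longrightarrow> diamond E b a c d"
  unfolding diamond_def using adj_sym by blast

lemma diamond_swap_middles: "diamond E a b c d \<Longrightarrow> diamond E a b d c"
  unfolding diamond_def using adj_sym by blast

lemma diamondD:
  assumes "diamond E a b c d"
  shows "a \<noteq> b" "a \<noteq> c" "a \<noteq> d" "b \<noteq> c" "b \<noteq> d" "c \<noteq> d" "\<not> E a b" "\<not> E b a"
    "E a c" "E a d" "E b c" "E b d" "E c d" "E c a" "E d a" "E c b" "E d b" "E d c"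
  using assms adj_sym unfolding diamond_def by auto

lemma diamond_subset_V: "diamond E a b c d \<Longrightarrow> {a, b, c, d} \<subseteq> V"
  using diamondD(9,11,13,18) adj_in_V(1) by blast

lemma diamond_middle_neighbour:
  assumes "diamond E a b c d" "E c z"
  shows "z = a \<or> z = b \<or> z = d"
  using neighbour_cases[of c a b d z] diamondD(1,3,5,13,14,16)[OF assms(1)] assms(2) by blast

lemma diamond_eq_shared_middle:
  assumes "diamond E a b c d" "diamond E a' b' c d'"
  shows "{a, b, c, d} = {a', b', c, d'}"
proof -
  have "a' \<in> {a, b, d}" "b' \<in> {a, b, d}" "d' \<in> {a, b, d}"
    using diamond_middle_neighbour[OF assms(1)] diamondD[OF assms(2)] by blast+
  moreover have "a' \<noteq> b'" "a' \<noteq> d'" "b' \<noteq> d'"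
    using diamondD[OF assms(2)] by blast+
  ultimately show ?thesis by auto
qed

lemma diamond_eq_end_middle:
  assumes "diamond E a b c d" "diamond E a' b' a d'"
  shows "{a, b, c, d} = {a', b', a, d'}"
proof -
  note A = diamondD[OF assms(1)] and B = diamondD[OF assms(2)]
  have nc: "E c z \<Longrightarrow> z = a \<or> z = b \<or> z = d" for z
    using diamond_middle_neighbour[OF assms(1)] by blast
  have nd: "E d z \<Longrightarrow> z = a \<or> z = b \<or> z = c" for z
    using diamond_middle_neighbour[OF diamond_swap_middles[OF assms(1)]] by blast
  have cd: "c \<in> {a', b', d'}" "d \<in> {a', b', d'}"
    using diamond_middle_neighbour[OF assms(2)] A by blast+
  then have d'cd: "d' \<in> {c, d}" and ab: "a' \<in> {c, d} \<or> b' \<in> {c, d}"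
    using A(6,13) B(7,8) by auto
  have nd': "E d' z \<Longrightarrow> z = a \<or> z = b \<or> (z \<in> {c, d} \<and> z \<noteq> d')" for z
    using d'cd nc nd adj_neq by blast
  from ab show ?thesis
  proof
    assume "a' \<in> {c, d}"
    then have "{c, d} = {a', d'}"
      using d'cd B by auto
    moreover have "b' = b"
      using nd'[of b'] B calculation by auto
    ultimately show ?thesis by auto
  next
    assume "b' \<in> {c, d}"
    then have "{c, d} = {b', d'}"
      using d'cd B by auto
    moreover have "a' = b"
      using nd'[of a'] B calculation by auto
    ultimately show ?thesis by auto
  qed
qed

lemma diamond_eq_shared_end:
  assumes "diamond E a b c d" "diamond E a b' c' d'"
  shows "{a, b, c, d} = {a, b', c', d'}"
proof -
  note A = diamondD[OF assms(1)] and B = diamondD[OF assms(2)]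
  obtain x where x: "E a x" "x \<noteq> c" "x \<noteq> d" "\<And>z. E a z \<Longrightarrow> z = c \<or> z = d \<or> z = x"
    using third_neighbourE[of a c d] A by blast
  have nc: "E c z \<Longrightarrow> z = a \<or> z = b \<or> z = d" for z
    using diamond_middle_neighbour[OF assms(1)] by blast
  have nd: "E d z \<Longrightarrow> z = a \<or> z = b \<or> z = c" for z
    using diamond_middle_neighbour[OF diamond_swap_middles[OF assms(1)]] by blast
  have cd': "c' \<in> {c, d, x}" "d' \<in> {c, d, x}"
    using x(4) B(9,10) by blast+
  have xab: "x \<noteq> a" "x \<noteq> b"
    using x(1) A(7) adj_neq by blast+
  have "x \<noteq> c'"
  proof
    assume "x = c'"
    moreover from this have "d' \<in> {c, d}"
      using cd' B(6) by auto
    ultimately show False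
      using nc nd B(18) xab x(2,3) by blast
  qed
  moreover have "x \<noteq> d'"
  proof
    assume "x = d'"
    moreover from this have "c' \<in> {c, d}"
      using cd' B(6) by auto
    ultimately show False
      using nc nd B(13) xab x(2,3) by blast
  qed
  ultimately have cd: "{c', d'} = {c, d}"
    using cd' B(6) by auto
  then have "b' = b"
    using nc nd B(1,4,5,16) by (metis doubleton_eq_iff insertCI)
  with cd show ?thesis by auto
qed

lemma diamond_relabel:
  assumes "diamond E a b c d" "v \<in> {a, b, c, d}"
  shows "\<exists>p q r s. diamond E p q r s \<and> {p, q, r, s} = {a, b, c, d} \<and> (v = p \<or> v = r)"
proof -
  consider "v = a" | "v = b" | "v = c" | "v = d"
    using assms(2) by blast
  then show ?thesis
  proof cases
    case 2
    then show ?thesis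
      using diamond_swap_ends[OF assms(1)] by (intro exI[of _ b] exI[of _ a] exI[of _ c] exI[of _ d]) auto
  next
    case 4
    then show ?thesis
      using diamond_swap_middles[OF assms(1)] by (intro exI[of _ a] exI[of _ b] exI[of _ d] exI[of _ c]) auto
  qed (use assms(1) in blast)+
qed

lemma diamond_vertices_eq:
  assumes "diamond E a b c d" "diamond E a' b' c' d'" "v \<in> {a, b, c, d}" "v \<in> {a', b', c', d'}"
  shows "{a, b, c, d} = {a', b', c', d'}"
proof -
  obtain p q r s where 1: "diamond E p q r s" "{p, q, r, s} = {a, b, c, d}" "v = p \<or> v = r"
    using diamond_relabel[OF assms(1,3)] by blast
  obtain p' q' r' s' where 2: "diamond E p' q' r' s'" "{p', q', r', s'} = {a', b', c', d'}"
      "v = p' \<or> v = r'"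
    using diamond_relabel[OF assms(2,4)] by blast
  from 1(3) 2(3) have "{p, q, r, s} = {p', q', r', s'}"
  proof (elim disjE)
    assume "v = p" "v = p'"
    then show ?thesis using diamond_eq_shared_end[OF 1(1), of q' r' s'] 2(1) by simp
  next
    assume "v = p" "v = r'"
    then show ?thesis using diamond_eq_end_middle[OF 1(1), of p' q' s'] 2(1) by simp
  next
    assume "v = r" "v = p'"
    then show ?thesis using diamond_eq_end_middle[OF 2(1), of p q s] 1(1) by simp
  next
    assume "v = r" "v = r'"
    then show ?thesis using diamond_eq_shared_middle[OF 1(1), of p' q' s'] 2(1) by simp
  qed
  with 1(2) 2(2) show ?thesis by simp
qed

definition in_diamond :: "'a \<Rightarrow> bool" where
  "in_diamond v \<longleftrightarrow> (\<exists>a b c d. diamond E a b c d \<and> v \<in> {a, b, c, d})"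

lemma triangleD:
  assumes "triangle E x y z"
  shows "x \<noteq> y" "x \<noteq> z" "y \<noteq> z" "E x y" "E x z" "E y z" "E y x" "E z x" "E z y"
  using assms adj_sym unfolding triangle_def by blast+

lemma triangle_swap: "triangle E x y z \<Longrightarrow> triangle E y x z" "triangle E x y z \<Longrightarrow> triangle E x z y"
  unfolding triangle_def using adj_sym by blast+

lemma triangle_subset_V: "triangle E x y z \<Longrightarrow> {x, y, z} \<subseteq> V"
  using triangleD(4,6,8) adj_in_V(1) by blast

lemma triangle_through:
  assumes "v \<in> V"
  obtains y z where "triangle E v y z"
proof -
  obtain a b c where abc: "a \<noteq> b" "a \<noteq> c" "b \<noteq> c" "E v a" "E v b" "E v c"
    by (rule neighboursE[OF assms])
  have "\<not> (a \<noteq> b \<and> a \<noteq> c \<and> b \<noteq> c \<and> E v a \<and> E v b \<and> E v c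
      \<and> \<not> E a b \<and> \<not> E a c \<and> \<not> E b c)"
    using claw_free assms adj_in_V(2)[OF abc(4)] adj_in_V(2)[OF abc(5)] adj_in_V(2)[OF abc(6)]
    unfolding claw_free_def by blast
  then have "E a b \<or> E a c \<or> E b c"
    using abc by blast
  then have "triangle E v a b \<or> triangle E v a c \<or> triangle E v b c"
    using abc adj_neq[OF abc(4)] adj_neq[OF abc(5)] adj_neq[OF abc(6)] unfolding triangle_def by blast
  with that show ?thesis by blast
qed

text \<open>The middles have all their neighbours in the diamond, and an end has only one neighbour
  outside it.\<close>
lemma triangle_within_diamond:
  assumes "triangle E x y z" "diamond E a b c d" "x \<in> {a, b, c, d}"
  shows "y \<in> {a, b, c, d}"
proof -
  obtain p q r s where pqrs: "diamond E p q r s" "{p, q, r, s} = {a, b, c, d}" "x = p \<or> x = r"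
    using diamond_relabel[OF assms(2,3)] by blast
  note T = triangleD[OF assms(1)] and D = diamondD[OF pqrs(1)]
  from pqrs(3) have "y \<in> {p, q, r, s}"
  proof
    assume "x = r"
    then show ?thesis using diamond_middle_neighbour[OF pqrs(1)] T by blast
  next
    assume xp: "x = p"
    show ?thesis
    proof (rule ccontr)
      assume y: "y \<notin> {p, q, r, s}"
      show False
      proof (cases "z \<in> {p, q, r, s}")
        case True
        then have "z = r \<or> z = s"
          using xp T D by auto
        then show False
          using diamond_middle_neighbour[OF pqrs(1)]
            diamond_middle_neighbour[OF diamond_swap_middles[OF pqrs(1)]] T y by blast
      next
        case False
        then show False
          using neighbour_cases[of p r s y z] xp T D y by auto
      qed
    qed
  qed
  with pqrs(2) show ?thesis by simp
qed

lemma in_diamond_if_two_triangles: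
  assumes "triangle E x y z" "triangle E x y' z'" "{y, z} \<noteq> {y', z'}"
  shows "in_diamond x"
proof -
  have "in_diamond x"
    if t1: "triangle E x y z" and t2: "triangle E x y' z'" and y': "y' \<noteq> y" "y' \<noteq> z"
    for y z y' z'
  proof -
    note A = triangleD[OF t1] and B = triangleD[OF t2]
    have "z' = y \<or> z' = z"
      using neighbour_cases[OF A(4,5) B(4) A(3)] y' B(3,5) by metis
    then show ?thesis
    proof
      assume "z' = y"
      then have "\<not> E z y'"
        using no_K4_subgraph[of x y z y'] A B y' by auto
      with \<open>z' = y\<close> have "diamond E z y' x y"
        unfolding diamond_def using A B y' adj_sym by metis
      then show ?thesis unfolding in_diamond_def by blast
    next
      assume "z' = z"
      then have "\<not> E y y'"
        using no_K4_subgraph[of x y z y'] A B y' by auto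
      with \<open>z' = z\<close> have "diamond E y y' x z"
        unfolding diamond_def using A B y' adj_sym by metis
      then show ?thesis unfolding in_diamond_def by blast
    qed
  qed
  moreover have "(y' \<noteq> y \<and> y' \<noteq> z) \<or> (z' \<noteq> y \<and> z' \<noteq> z)"
    using assms(3) triangleD(3)[OF assms(2)] by auto
  ultimately show ?thesis
    using assms(1,2) triangle_swap(2)[OF assms(2)] by blast
qed

section \<open>Units\<close>

definition tri_unit :: "'a set \<Rightarrow> bool" where
  "tri_unit T \<longleftrightarrow> (\<exists>x y z. triangle E x y z \<and> T = {x, y, z}) \<and> (\<forall>v\<in>T. \<not> in_diamond v)"

lemma tri_unit_subset_V: "tri_unit T \<Longrightarrow> T \<subseteq> V"
  unfolding tri_unit_def using triangle_subset_V by blast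

lemma tri_unit_card: "tri_unit T \<Longrightarrow> finite T \<and> card T = 3"
  unfolding tri_unit_def triangle_def by auto

lemma tri_unit_adj: "tri_unit T \<Longrightarrow> t \<in> T \<Longrightarrow> x \<in> T \<Longrightarrow> t \<noteq> x \<Longrightarrow> E t x"
  unfolding tri_unit_def triangle_def using adj_sym by blast

lemma triangle_relabel:
  assumes "triangle E x y z" "w \<in> {x, y, z}"
  shows "\<exists>y' z'. triangle E w y' z' \<and> {x, y, z} = {w, y', z'}"
proof -
  consider "w = x" | "w = y" | "w = z"
    using assms(2) by blast
  then show ?thesis
  proof cases
    case 2
    then show ?thesis
      using triangle_swap(1)[OF assms(1)] by (intro exI[of _ x] exI[of _ z]) auto
  next
    case 3
    then show ?thesis
      using triangle_swap(1)[OF triangle_swap(2)[OF assms(1)]] by (intro exI[of _ x] exI[of _ y]) auto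
  qed (use assms(1) in blast)
qed

lemma tri_unit_through:
  assumes "w \<in> V" "\<not> in_diamond w"
  obtains y z where "tri_unit {w, y, z}"
proof -
  obtain y z where t: "triangle E w y z"
    by (rule triangle_through[OF assms(1)])
  have "\<not> in_diamond y"
    using triangle_within_diamond[OF triangle_swap(1)[OF t]] assms(2) unfolding in_diamond_def by blast
  moreover have "\<not> in_diamond z"
    using triangle_within_diamond[OF triangle_swap(1)[OF triangle_swap(2)[OF t]]] assms(2)
    unfolding in_diamond_def by blast
  ultimately have "tri_unit {w, y, z}"
    using t assms(2) unfolding tri_unit_def by blast
  then show ?thesis by (rule that)
qed

lemma tri_units_disjoint:
  assumes "tri_unit A" "tri_unit B" "A \<noteq> B"
  shows "A \<inter> B = {}"
proof (rule ccontr)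
  assume "A \<inter> B \<noteq> {}"
  then obtain w where w: "w \<in> A" "w \<in> B" by blast
  obtain x y z where "triangle E x y z" "A = {x, y, z}"
    using assms(1) unfolding tri_unit_def by blast
  then obtain p q where pq: "triangle E w p q" "A = {w, p, q}"
    using triangle_relabel w(1) by metis
  obtain x' y' z' where "triangle E x' y' z'" "B = {x', y', z'}"
    using assms(2) unfolding tri_unit_def by blast
  then obtain p' q' where pq': "triangle E w p' q'" "B = {w, p', q'}"
    using triangle_relabel w(2) by metis
  have "\<not> in_diamond w"
    using assms(1) w(1) unfolding tri_unit_def by blast
  then have "{p, q} = {p', q'}"
    using in_diamond_if_two_triangles[OF pq(1) pq'(1)] by blast
  with pq(2) pq'(2) assms(3) show False by auto
qed

definition units :: "'a set set" where
  "units = {{a, b, c, d} | a b c d. diamond E a b c d} \<union> Collect tri_unit"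

lemma diamond_induces_diamond:
  assumes "diamond E a b c d"
  shows "induces_diamond V E {a, b, c, d}"
proof -
  note D = diamondD[OF assms]
  have "card {a, b, c, d} = 4"
    using D by auto
  moreover have "\<forall>x\<in>{a, b, c, d}. \<forall>y\<in>{a, b, c, d}. x \<noteq> y \<and> {x, y} \<noteq> {a, b} \<longrightarrow> E x y"
    using D by (auto simp: doubleton_eq_iff)
  ultimately show ?thesis
    unfolding induces_diamond_def using diamond_subset_V[OF assms] D by blast
qed

lemma tri_unit_induces_triangle: "tri_unit T \<Longrightarrow> induces_triangle V E T"
  unfolding induces_triangle_def using tri_unit_subset_V tri_unit_card tri_unit_adj by blast

lemma unit_partition_units: "unit_partition V E units"
proof -
  have "\<Union> units \<subseteq> V"
    unfolding units_def using diamond_subset_V tri_unit_subset_V by blast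
  moreover have "V \<subseteq> \<Union> units"
  proof
    fix v assume v: "v \<in> V"
    show "v \<in> \<Union> units"
    proof (cases "in_diamond v")
      case True
      then show ?thesis unfolding in_diamond_def units_def by blast
    next
      case False
      then obtain y z where "tri_unit {v, y, z}"
        using tri_unit_through v by blast
      then show ?thesis unfolding units_def by blast
    qed
  qed
  moreover have "A \<inter> B = {}" if "A \<in> units" "B \<in> units" "A \<noteq> B" for A B
  proof -
    have "A \<inter> B = {}" if "A = {a, b, c, d}" "diamond E a b c d" "tri_unit B" for A B a b c d
      using that unfolding tri_unit_def in_diamond_def by blast
    with \<open>A \<in> units\<close> \<open>B \<in> units\<close> show ?thesis
      unfolding units_def
    proof (elim UnE CollectE exE conjE)
      fix a b c d a' b' c' d'
      assume "diamond E a b c d" "A = {a, b, c, d}" "diamond E a' b' c' d'" "B = {a', b', c', d'}"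
      then show ?thesis
        using diamond_vertices_eq \<open>A \<noteq> B\<close> by blast
    qed (use tri_units_disjoint \<open>A \<noteq> B\<close> in blast)+
  qed
  moreover have "induces_triangle V E A \<or> induces_diamond V E A" if "A \<in> units" for A
    using that unfolding units_def using diamond_induces_diamond tri_unit_induces_triangle by blast
  ultimately show ?thesis
    unfolding unit_partition_def by blast
qed

lemma triangle_unit_if_tri_unit: "tri_unit T \<Longrightarrow> triangle_unit V E T"
  using unit_partition_units tri_unit_induces_triangle unfolding triangle_unit_def units_def by blast

section \<open>Components left by a triangle unit\<close>

lemma card_adj_pairs:
  assumes "S \<subseteq> V"
  shows "3 * card S = card {(a, b). a \<in> S \<and> b \<in> S \<and> E a b} + card {(a, b). a \<in> S \<and> b \<notin> S \<and> E a b}"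
proof -
  have fin: "finite S"
    using finite_V assms finite_subset by blast
  have sigma: "{(a, b). a \<in> S \<and> E a b} = Sigma S (neighbours V E)"
    unfolding neighbours_def using adj_in_V(2) by auto
  have "card (Sigma S (neighbours V E)) = (\<Sum>a\<in>S. card (neighbours V E a))"
    using fin finite_neighbours by simp
  also have "\<dots> = (\<Sum>a\<in>S. 3)"
    using card_neighbours assms by (intro sum.cong) auto
  also have "\<dots> = 3 * card S"
    by simp
  finally have total: "card {(a, b). a \<in> S \<and> E a b} = 3 * card S"
    using sigma by simp
  have fin_pairs: "finite {(a, b). a \<in> S \<and> E a b}"
    unfolding sigma using fin finite_neighbours by simp
  have split: "{(a, b). a \<in> S \<and> E a b}
      = {(a, b). a \<in> S \<and> b \<in> S \<and> E a b} \<union> {(a, b). a \<in> S \<and> b \<notin> S \<and> E a b}"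
    by auto
  have "card {(a, b). a \<in> S \<and> E a b}
      = card {(a, b). a \<in> S \<and> b \<in> S \<and> E a b} + card {(a, b). a \<in> S \<and> b \<notin> S \<and> E a b}"
    unfolding split by (rule card_Un_disjoint) (use fin_pairs split in \<open>auto intro: finite_subset\<close>)
  with total show ?thesis by simp
qed

text \<open>Handshake parity: each edge inside S is counted twice.\<close>
lemma odd_card_if_one_leaving_edge:
  assumes "S \<subseteq> V" "card {(a, b). a \<in> S \<and> b \<notin> S \<and> E a b} = 1"
  shows "odd (card S)"
proof -
  have "3 * card S = card {(a, b). a \<in> S \<and> b \<in> S \<and> E a b} + 1"
    using card_adj_pairs[OF assms(1)] assms(2) by simp
  moreover have "even (card {(a, b). a \<in> S \<and> b \<in> S \<and> E a b})"
    using even_card_inner_pairs finite_subset[OF assms(1) finite_V] by blast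
  moreover have "3 * n = m + 1 \<Longrightarrow> even m \<Longrightarrow> odd n" for n m :: nat
    by presburger
  ultimately show ?thesis by blast
qed

lemma even_card_if_union_of_diamonds:
  assumes "S \<subseteq> V"
    and "\<And>w. w \<in> S \<Longrightarrow> \<exists>a b c d. diamond E a b c d \<and> w \<in> {a, b, c, d} \<and> {a, b, c, d} \<subseteq> S"
  shows "even (card S)"
proof -
  define D where "D = {X. X \<subseteq> S \<and> (\<exists>a b c d. diamond E a b c d \<and> X = {a, b, c, d})}"
  have union: "\<Union> D = S"
  proof
    show "S \<subseteq> \<Union> D"
    proof
      fix w assume "w \<in> S"
      then obtain a b c d where "diamond E a b c d" "w \<in> {a, b, c, d}" "{a, b, c, d} \<subseteq> S"
        using assms(2) by blast
      then show "w \<in> \<Union> D"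
        unfolding D_def by blast
    qed
  qed (auto simp: D_def)
  have disjoint: "pairwise disjnt D"
  proof (rule pairwiseI)
    fix X Y assume "X \<in> D" "Y \<in> D" "X \<noteq> Y"
    obtain a b c d where X: "diamond E a b c d" "X = {a, b, c, d}"
      using \<open>X \<in> D\<close> unfolding D_def by blast
    obtain a' b' c' d' where Y: "diamond E a' b' c' d'" "Y = {a', b', c', d'}"
      using \<open>Y \<in> D\<close> unfolding D_def by blast
    show "disjnt X Y"
    proof (rule ccontr)
      assume "\<not> disjnt X Y"
      then obtain v where "v \<in> X" "v \<in> Y"
        unfolding disjnt_def by blast
      then have "X = Y"
        using diamond_vertices_eq[OF X(1) Y(1)] X(2) Y(2) by blast
      with \<open>X \<noteq> Y\<close> show False ..
    qed
  qed
  have "finite X" if "X \<in> D" for X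
    using that finite_subset[OF assms(1) finite_V] finite_subset unfolding D_def by blast
  then have "card S = (\<Sum>X\<in>D. card X)"
    using card_Union_disjoint[OF disjoint] union by metis
  also have "\<dots> = (\<Sum>X\<in>D. 4)"
  proof (rule sum.cong)
    fix X assume "X \<in> D"
    then obtain a b c d where "diamond E a b c d" "X = {a, b, c, d}"
      unfolding D_def by blast
    then show "card X = 4"
      using diamondD(1-6) by auto
  qed simp
  finally show ?thesis
    by simp
qed

lemma diamond_connected:
  assumes "diamond E a b c d" "p \<in> {a, b, c, d}" "q \<in> {a, b, c, d}" "{a, b, c, d} \<subseteq> V - S"
  shows "(restr E (V - S))\<^sup>*\<^sup>* p q"
proof -
  note D = diamondD[OF assms(1)]
  have "p = c \<or> restr E (V - S) p c"
    using assms(2,4) D unfolding restr_def by auto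
  moreover have "q = c \<or> restr E (V - S) c q"
    using assms(3,4) D unfolding restr_def by auto
  ultimately show ?thesis
    by (metis converse_rtranclp_into_rtranclp r_into_rtranclp rtranclp.rtrancl_refl)
qed

definition outer :: "'a set \<Rightarrow> 'a \<Rightarrow> 'a" where
  "outer T t = (SOME u. E t u \<and> u \<notin> T)"

lemma outer_neighbour:
  assumes "tri_unit T" "t \<in> T"
  shows "E t (outer T t)" "outer T t \<notin> T" "\<And>u. E t u \<Longrightarrow> u \<notin> T \<Longrightarrow> u = outer T t"
proof -
  obtain x y z where "triangle E x y z" "T = {x, y, z}"
    using assms(1) unfolding tri_unit_def by blast
  then obtain y' z' where t: "triangle E t y' z'" "T = {t, y', z'}"
    using triangle_relabel assms(2) by metis
  note A = triangleD[OF t(1)]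
  obtain w where w: "E t w" "w \<noteq> y'" "w \<noteq> z'" "\<And>u. E t u \<Longrightarrow> u = y' \<or> u = z' \<or> u = w"
    using third_neighbourE[OF A(4,5,3)] by blast
  have wT: "w \<notin> T"
    using t(2) w(2,3) adj_neq[OF w(1)] by blast
  have "E t (outer T t) \<and> outer T t \<notin> T"
    unfolding outer_def using w(1) wT by (rule someI[where x = w, OF conjI])
  then show "E t (outer T t)" "outer T t \<notin> T"
    by blast+
  show "u = outer T t" if "E t u" "u \<notin> T" for u
    using w(4) that \<open>E t (outer T t) \<and> outer T t \<notin> T\<close> t(2) by blast
qed

lemma outer_in_V: "tri_unit T \<Longrightarrow> t \<in> T \<Longrightarrow> outer T t \<in> V - T"
  using outer_neighbour(1,2) adj_in_V(2) by blast

lemma component_through_outer: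
  assumes "tri_unit T" "w \<in> V - T"
  obtains t where "t \<in> T" "component T w = component T (outer T t)"
proof -
  obtain x where x: "x \<in> T"
    using tri_unit_card[OF assms(1)] by fastforce
  have "(restr E V)\<^sup>*\<^sup>* w x"
    using connected assms(2) x tri_unit_subset_V[OF assms(1)] unfolding connected_graph_def by blast
  then obtain w' t where path: "(restr E (V - T))\<^sup>*\<^sup>* w w'" "w' \<in> V - T" "t \<in> T" "E w' t"
    using path_leaves_through_edge[OF _ assms(2) x] by blast
  have "w' = outer T t"
    using outer_neighbour(3)[OF assms(1) path(3)] path(2,4) adj_sym by blast
  then have "component T w = component T (outer T t)"
    using component_eq_if_path[OF path(1)] by simp
  with path(3) show ?thesis
    by (rule that)
qed

lemma inj_on_outer_component:
  assumes "tri_unit T" "card (components_minus V E T) \<ge> 3"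
  shows "inj_on (\<lambda>t. component T (outer T t)) T"
proof -
  let ?f = "\<lambda>t. component T (outer T t)"
  have fin: "finite T" "card T = 3"
    using tri_unit_card[OF assms(1)] by auto
  have "components_minus V E T \<subseteq> ?f ` T"
    unfolding components_minus_eq using component_through_outer[OF assms(1)] by blast
  then have "card (components_minus V E T) \<le> card (?f ` T)"
    using fin(1) by (simp add: card_mono)
  moreover have "card (?f ` T) \<le> card T"
    using card_image_le fin(1) by blast
  ultimately have "card (?f ` T) = card T"
    using assms(2) fin(2) by linarith
  then show ?thesis
    using inj_on_iff_eq_card fin(1) by blast
qed

lemma leaving_edges_outer_component:
  assumes "tri_unit T" "inj_on (\<lambda>t. component T (outer T t)) T" "x \<in> T"
  shows "{(a, b). a \<in> component T (outer T x) \<and> b \<notin> component T (outer T x) \<and> E a b}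
    = {(outer T x, x)}"
proof -
  let ?C = "component T (outer T x)"
  have "(a, b) = (outer T x, x)" if ab: "a \<in> ?C" "b \<notin> ?C" "E a b" for a b
  proof -
    have b: "b \<in> T"
      using component_adj[OF ab(1,3)] ab(2) by blast
    have "a \<notin> T"
      using ab(1) component_subset by blast
    then have a: "a = outer T b"
      using outer_neighbour(3)[OF assms(1) b] adj_sym[OF ab(3)] by blast
    then have "component T (outer T b) = ?C"
      using component_eq_if_mem[OF ab(1)] by simp
    then have "b = x"
      using assms(2,3) b unfolding inj_on_def by blast
    with a show ?thesis by simp
  qed
  moreover have "outer T x \<in> ?C"
    using component_self outer_in_V[OF assms(1,3)] by blast
  moreover have "x \<notin> ?C"
    using component_subset assms(3) by blast
  moreover have "E (outer T x) x"
    using outer_neighbour(1)[OF assms(1,3)] adj_sym by blast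
  ultimately show ?thesis by auto
qed

text \<open>An outer component has odd order, so it cannot be a union of diamonds; a vertex of it
  outside every diamond spans a triangle unit, which stays inside because it misses T.\<close>
lemma tri_unit_in_outer_component:
  assumes "tri_unit T" "inj_on (\<lambda>t. component T (outer T t)) T" "x \<in> T"
  obtains T' where "tri_unit T'" "T' \<subseteq> component T (outer T x)"
proof -
  let ?C = "component T (outer T x)"
  have CV: "?C \<subseteq> V - T"
    by (rule component_subset)
  have "odd (card ?C)"
    using odd_card_if_one_leaving_edge[of ?C] leaving_edges_outer_component[OF assms] CV by auto
  moreover have "\<exists>a b c d. diamond E a b c d \<and> w \<in> {a, b, c, d} \<and> {a, b, c, d} \<subseteq> ?C"
    if w: "w \<in> ?C" "in_diamond w" for w
  proof -
    obtain a b c d where abcd: "diamond E a b c d" "w \<in> {a, b, c, d}"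
      using w(2) unfolding in_diamond_def by blast
    have sub: "{a, b, c, d} \<subseteq> V - T"
      using diamond_subset_V[OF abcd(1)] assms(1) abcd(1) unfolding tri_unit_def in_diamond_def by blast
    have "p \<in> ?C" if p: "p \<in> {a, b, c, d}" for p
    proof -
      have "component T w = component T p"
        using component_eq_if_path diamond_connected[OF abcd(1,2) p sub] by blast
      then show ?thesis
        using component_eq_if_mem[OF w(1)] component_self[of p T] p sub by blast
    qed
    with abcd show ?thesis by blast
  qed
  ultimately obtain w where w: "w \<in> ?C" "\<not> in_diamond w"
    using even_card_if_union_of_diamonds[of ?C] CV by blast
  then obtain y z where T': "tri_unit {w, y, z}"
    using tri_unit_through CV by blast
  have "{w, y, z} \<inter> T = {}"
    using tri_units_disjoint[OF T' assms(1)] w(1) CV by blast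
  moreover have "w \<noteq> y" "w \<noteq> z"
    using tri_unit_card[OF T'] by (auto simp: card_insert_if split: if_split_asm)
  ultimately have "y \<in> ?C" "z \<in> ?C"
    using component_adj[OF w(1)] tri_unit_adj[OF T'] by blast+
  with w(1) have "{w, y, z} \<subseteq> ?C"
    by blast
  with T' show ?thesis
    by (rule that)
qed

text \<open>A vertex outside the outer component at x is joined to T without passing through that
  component, and T is a triangle containing x.\<close>
lemma attachment_reaches_outside:
  assumes T: "tri_unit T" "x \<in> T" and T': "T' \<subseteq> component T (outer T x)"
    and u: "u \<in> V - T'" "u \<notin> component T (outer T x)"
  shows "(restr E (V - T'))\<^sup>*\<^sup>* x u"
proof -
  let ?C = "component T (outer T x)"
  have CV: "?C \<subseteq> V - T"
    by (rule component_subset)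
  have TV: "T \<subseteq> V - T'"
    using tri_unit_subset_V[OF T(1)] T' CV by blast
  have edge: "restr E (V - T') x t" if "t \<in> T" "t \<noteq> x" for t
    using tri_unit_adj[OF T(1) T(2) that(1)] that T(2) TV unfolding restr_def by auto
  show ?thesis
  proof (cases "u \<in> T")
    case True
    then show ?thesis
      using edge[of u] by (cases "u = x") auto
  next
    case False
    then have uVT: "u \<in> V - T"
      using u by blast
    obtain t where t: "t \<in> T" "component T u = component T (outer T t)"
      using component_through_outer[OF T(1) uVT] by blast
    have "component T u \<inter> ?C = {}"
      using component_eq_if_mem component_self[OF uVT] u(2) by blast
    then have sub: "component T u \<subseteq> V - T'"
      using T' component_subset by blast
    have out: "outer T t \<in> component T u"
      using t(2) component_self outer_in_V[OF T(1) t(1)] by simp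
    then have "(restr E (V - T))\<^sup>*\<^sup>* u (outer T t)"
      unfolding component_def by blast
    then have "(restr E (V - T'))\<^sup>*\<^sup>* u (outer T t)"
      using restr_rtranclp_mono[OF path_within_component sub] by blast
    moreover have "restr E (V - T') (outer T t) t"
      using outer_neighbour(1)[OF T(1) t(1)] adj_sym out sub TV t(1) unfolding restr_def by blast
    moreover have "(restr E (V - T'))\<^sup>*\<^sup>* t x"
      using edge[OF t(1)] restr_rtranclp_sym by (cases "t = x") auto
    ultimately have "(restr E (V - T'))\<^sup>*\<^sup>* u x"
      by (meson rtranclp.rtrancl_into_rtrancl rtranclp_trans)
    then show ?thesis
      by (rule restr_rtranclp_sym)
  qed
qed

lemma component_within_outer_component:
  assumes T: "tri_unit T" "x \<in> T" and T': "T' \<subseteq> component T (outer T x)"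
    and K: "K \<in> components_minus V E T'" "x \<notin> K"
  shows "K \<subseteq> component T (outer T x)"
proof
  fix u assume "u \<in> K"
  obtain v where v: "K = component T' v"
    using K(1) unfolding components_minus_eq by blast
  have uV: "u \<in> V - T'"
    using \<open>u \<in> K\<close> component_subset v by blast
  show "u \<in> component T (outer T x)"
  proof (rule ccontr)
    assume "u \<notin> component T (outer T x)"
    then have "component T' x = component T' u"
      using component_eq_if_path attachment_reaches_outside[OF T T' uV] by blast
    moreover have "x \<in> V - T'"
      using tri_unit_subset_V[OF T(1)] T(2) T' component_subset by blast
    then have "x \<in> component T' x"
      by (rule component_self)
    ultimately show False
      using component_eq_if_mem \<open>u \<in> K\<close> v K(2) by blast
  qed
qed

lemma smaller_outer_component:
  assumes three: "\<And>T. tri_unit T \<Longrightarrow> 3 \<le> card (components_minus V E T)"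
    and T: "tri_unit T" and C: "C \<in> components_minus V E T"
  obtains T' K where "tri_unit T'" "K \<in> components_minus V E T'" "card K < card C"
proof -
  obtain v where v: "v \<in> V - T" "C = component T v"
    using C unfolding components_minus_eq by blast
  obtain x where x: "x \<in> T" "C = component T (outer T x)"
    using component_through_outer[OF T v(1)] v(2) by metis
  obtain T' where T': "tri_unit T'" "T' \<subseteq> C"
    unfolding x(2) by (rule tri_unit_in_outer_component[OF T inj_on_outer_component[OF T three[OF T]] x(1)])
  have "\<not> components_minus V E T' \<subseteq> {component T' x}"
  proof
    assume "components_minus V E T' \<subseteq> {component T' x}"
    then have "card (components_minus V E T') \<le> card {component T' x}"
      by (rule card_mono[rotated]) simp
    with three[OF T'(1)] show False
      by simp
  qed
  then obtain K where K: "K \<in> components_minus V E T'" "K \<noteq> component T' x"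
    by blast
  have "x \<notin> K"
    using K component_eq_if_mem unfolding components_minus_eq by blast
  then have "K \<subseteq> C"
    using component_within_outer_component[OF T(1) x(1)] T'(2) K(1) x(2) by blast
  moreover have "K \<inter> T' = {}"
    using K(1) component_subset unfolding components_minus_eq by blast
  moreover have "T' \<noteq> {}"
    using tri_unit_card[OF T'(1)] by auto
  ultimately have "K \<subset> C"
    using T'(2) by blast
  moreover have "finite C"
    using v(2) component_subset finite_V finite_subset by blast
  ultimately have "card K < card C"
    by (rule psubset_card_mono[rotated])
  with T'(1) K(1) show ?thesis
    by (rule that)
qed

text \<open>Otherwise the components of all triangle units would admit an infinite descent in size.\<close>
lemma tri_unit_with_few_components:
  assumes "tri_unit T0"
  shows "\<exists>T. tri_unit T \<and> card (components_minus V E T) \<le> 2"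
proof (rule ccontr)
  assume "\<not> ?thesis"
  then have three: "3 \<le> card (components_minus V E T)" if "tri_unit T" for T
    using that by fastforce
  have "\<not> (tri_unit T \<and> C \<in> components_minus V E T)" for T C
  proof (induction "card C" arbitrary: T C rule: less_induct)
    case less
    then show ?case
      using smaller_outer_component[OF three] by metis
  qed
  moreover obtain t where "t \<in> T0"
    using tri_unit_card[OF assms] by fastforce
  ultimately show False
    using assms outer_in_V[OF assms] unfolding components_minus_eq by blast
qed

end

section \<open>Graphs covered by diamonds\<close>

definition necklace_nbrs :: "nat \<Rightarrow> nat \<times> nat \<Rightarrow> (nat \<times> nat) set" where
  "necklace_nbrs k u = (let i = fst u; p = snd u in
     if p = 0 then {(i, 2), (i, 3), ((i + 1) mod k, 1)}
     else if p = 1 then {(i, 2), (i, 3), ((i + k - 1) mod k, 0)}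
     else if p = 2 then {(i, 0), (i, 1), (i, 3)}
     else {(i, 0), (i, 1), (i, 2)})"

lemma Suc_mod_eq_if:
  fixes j k :: nat
  assumes "j < k"
  shows "(j + 1) mod k = (if j + 1 = k then 0 else j + 1)"
  using assms by (cases "j + 1 = k") auto

lemma pred_mod_eq_if:
  fixes i k :: nat
  assumes "i < k"
  shows "(i + k - 1) mod k = (if i = 0 then k - 1 else i - 1)"
proof (cases "i = 0")
  case False
  then have "i + k - 1 = (i - 1) + k"
    by simp
  then have "(i + k - 1) mod k = (i - 1) mod k"
    by simp
  with False assms show ?thesis
    by simp
qed (use assms in simp)

lemma pred_mod_iff_Suc_mod:
  fixes i j k :: nat
  assumes "i < k" "j < k"
  shows "j = (i + k - 1) mod k \<longleftrightarrow> i = (j + 1) mod k"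
  unfolding Suc_mod_eq_if[OF assms(2)] pred_mod_eq_if[OF assms(1)] using assms by auto

lemma necklace_E_iff:
  assumes "i < k" "j < k" "p < 4" "q < 4" "k \<ge> 2"
  shows "necklace_E k (i, p) (j, q) \<longleftrightarrow> (j, q) \<in> necklace_nbrs k (i, p)"
proof -
  have "(i, p) \<in> necklace_V k" "(j, q) \<in> necklace_V k"
    using assms unfolding necklace_V_def by auto
  moreover have "(i + 1) mod k \<noteq> i"
    unfolding Suc_mod_eq_if[OF assms(1)] using assms by auto
  moreover have "j = (i + k - 1) mod k \<longleftrightarrow> i = (j + 1) mod k"
    using pred_mod_iff_Suc_mod assms by blast
  moreover have "p = 0 \<or> p = 1 \<or> p = 2 \<or> p = 3" "q = 0 \<or> q = 1 \<or> q = 2 \<or> q = 3"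
    using assms by auto
  ultimately show ?thesis
    unfolding necklace_E_def necklace_nbrs_def Let_def by (elim disjE) (auto simp: doubleton_eq_iff)
qed

locale all_in_diamonds = claw_free_cubic +
  assumes all_in_diamond: "\<And>v. v \<in> V \<Longrightarrow> in_diamond v"
begin

definition diamond_end :: "'a \<Rightarrow> bool" where
  "diamond_end v \<longleftrightarrow> (\<exists>b c d. diamond E v b c d)"

definition partner :: "'a \<Rightarrow> 'a" where
  "partner v = (SOME b. \<exists>c d. diamond E v b c d)"

definition middles :: "'a \<Rightarrow> 'a \<times> 'a" where
  "middles v = (SOME cd. diamond E v (partner v) (fst cd) (snd cd))"

definition link :: "'a \<Rightarrow> 'a" where
  "link v = (SOME u. E v u \<and> diamond_end u)"

lemma diamond_partner: "diamond_end v \<Longrightarrow> \<exists>c d. diamond E v (partner v) c d"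
  unfolding diamond_end_def partner_def by (metis (mono_tags, lifting) someI_ex)

lemma diamond_middles:
  assumes "diamond_end v"
  shows "diamond E v (partner v) (fst (middles v)) (snd (middles v))"
proof -
  obtain c d where "diamond E v (partner v) c d"
    using diamond_partner[OF assms] by blast
  then have "\<exists>cd. diamond E v (partner v) (fst cd) (snd cd)"
    by (intro exI[of _ "(c, d)"]) simp
  then show ?thesis
    unfolding middles_def by (rule someI_ex)
qed

lemma partner_unique:
  assumes "diamond E v b c d"
  shows "b = partner v"
proof -
  obtain c' d' where h: "diamond E v (partner v) c' d'"
    using diamond_partner assms unfolding diamond_end_def by blast
  have "partner v \<in> {v, b, c, d}"
    using diamond_vertices_eq[OF assms h, of v] by simp
  with diamondD(9,10)[OF assms] diamondD(1,7)[OF h] show ?thesis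
    by auto
qed

lemma middle_not_end:
  assumes "diamond E a b c d"
  shows "\<not> diamond_end c"
proof
  assume "diamond_end c"
  then obtain b' c' d' where h: "diamond E c b' c' d'"
    unfolding diamond_end_def by blast
  have "b' \<in> {a, b, c, d}"
    using diamond_vertices_eq[OF assms h, of c] by simp
  with diamondD(13,14,16)[OF assms] diamondD(1,7)[OF h] show False
    by auto
qed

lemma
  assumes "diamond_end v"
  shows diamond_end_partner: "diamond_end (partner v)"
    and partner_partner: "partner (partner v) = v"
    and partner_not_adj: "\<not> E v (partner v)"
    and partner_neq: "partner v \<noteq> v"
proof -
  obtain c d where h: "diamond E v (partner v) c d"
    using diamond_partner[OF assms] by blast
  have h': "diamond E (partner v) v c d"
    using diamond_swap_ends[OF h] .
  show "diamond_end (partner v)"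
    using h' unfolding diamond_end_def by blast
  show "partner (partner v) = v"
    using partner_unique[OF h'] by simp
  show "\<not> E v (partner v)" "partner v \<noteq> v"
    using diamondD(1,7)[OF h] by auto
qed

text \<open>The neighbour of an end outside its diamond is again an end: were it a middle, the end
  would lie in two diamonds.\<close>
lemma outside_neighbour_of_end:
  assumes "diamond E v b c d"
  obtains x where "E v x" "diamond_end x" "x \<noteq> c" "x \<noteq> d" "\<And>z. E v z \<Longrightarrow> z = c \<or> z = d \<or> z = x"
proof -
  note A = diamondD[OF assms]
  obtain x where x: "E v x" "x \<noteq> c" "x \<noteq> d" "\<And>z. E v z \<Longrightarrow> z = c \<or> z = d \<or> z = x"
    using third_neighbourE[OF A(9,10,6)] by blast
  obtain p q r s where pqrs: "diamond E p q r s" "x \<in> {p, q, r, s}"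
    using all_in_diamond[OF adj_in_V(2)[OF x(1)]] unfolding in_diamond_def by blast
  have "diamond_end x"
  proof (cases "x = r \<or> x = s")
    case True
    then have "v \<in> {p, q, r, s}"
      using adj_sym[OF x(1)] diamond_middle_neighbour[OF pqrs(1)]
        diamond_middle_neighbour[OF diamond_swap_middles[OF pqrs(1)]] by blast
    then have "x \<in> {v, b, c, d}"
      using diamond_vertices_eq[OF assms pqrs(1), of v] pqrs(2) by simp
    moreover have "x \<noteq> v" "x \<noteq> b"
      using adj_neq[OF x(1)] x(1) A(7) by auto
    ultimately show ?thesis
      using x(2,3) by blast
  next
    case False
    then have "x = p \<or> x = q"
      using pqrs(2) by blast
    then show ?thesis
      using pqrs(1) diamond_swap_ends[OF pqrs(1)] unfolding diamond_end_def by blast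
  qed
  with x show ?thesis
    using that by blast
qed

lemma
  assumes "diamond_end v"
  shows link_adj: "E v (link v)"
    and diamond_end_link: "diamond_end (link v)"
proof -
  obtain b c d where "diamond E v b c d"
    using assms unfolding diamond_end_def by blast
  then obtain x where "E v x" "diamond_end x"
    by (rule outside_neighbour_of_end)
  then have "E v (link v) \<and> diamond_end (link v)"
    unfolding link_def by (rule someI[where x = x, OF conjI])
  then show "E v (link v)" "diamond_end (link v)"
    by blast+
qed

lemma link_unique:
  assumes "diamond_end v" "E v u" "diamond_end u"
  shows "u = link v"
proof -
  obtain b c d where h: "diamond E v b c d"
    using assms unfolding diamond_end_def by blast
  obtain x where x: "E v x" "diamond_end x" "x \<noteq> c" "x \<noteq> d" "\<And>z. E v z \<Longrightarrow> z = c \<or> z = d \<or> z = x"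
    using outside_neighbour_of_end[OF h] by blast
  have "\<not> diamond_end c" "\<not> diamond_end d"
    using middle_not_end[OF h] middle_not_end[OF diamond_swap_middles[OF h]] by blast+
  then show ?thesis
    using x(5)[OF assms(2)] x(5)[OF link_adj[OF assms(1)]] assms(3) diamond_end_link[OF assms(1)] by metis
qed

lemma link_link: "diamond_end v \<Longrightarrow> link (link v) = v"
  using link_unique[OF diamond_end_link adj_sym[OF link_adj]] by simp

lemma link_neq: "diamond_end v \<Longrightarrow> link v \<noteq> v" "diamond_end v \<Longrightarrow> link v \<noteq> partner v"
  using link_adj adj_neq partner_not_adj by metis+

definition step :: "'a \<Rightarrow> 'a" where
  "step v = link (partner v)"

definition start :: 'a where
  "start = (SOME v. diamond_end v)"

definition bead :: "nat \<Rightarrow> 'a" where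
  "bead i = (step ^^ i) start"

definition period :: nat where
  "period = (LEAST p. p > 0 \<and> bead p = start)"

lemma diamond_end_start: "diamond_end start"
proof -
  obtain v where "v \<in> V"
    using connected unfolding connected_graph_def by blast
  then obtain p q r s where "diamond E p q r s"
    using all_in_diamond unfolding in_diamond_def by blast
  then have "\<exists>v. diamond_end v"
    unfolding diamond_end_def by blast
  then show ?thesis
    unfolding start_def by (rule someI_ex)
qed

lemma diamond_end_step: "diamond_end v \<Longrightarrow> diamond_end (step v)"
  unfolding step_def using diamond_end_link diamond_end_partner by blast

lemma bead_0: "bead 0 = start"
  unfolding bead_def by simp

lemma bead_Suc: "bead (Suc i) = step (bead i)"
  unfolding bead_def by simp

lemma diamond_end_bead: "diamond_end (bead i)"
  by (induction i) (auto simp: bead_0 bead_Suc diamond_end_start diamond_end_step)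

lemma step_inj:
  assumes "diamond_end u" "diamond_end v" "step u = step v"
  shows "u = v"
proof -
  have "link (link (partner u)) = link (link (partner v))"
    using assms(3) unfolding step_def by simp
  then have "partner u = partner v"
    using link_link diamond_end_partner assms(1,2) by metis
  then show ?thesis
    using partner_partner assms(1,2) by metis
qed

lemma bead_cancel: "bead (i + n) = bead (j + n) \<Longrightarrow> bead i = bead j"
proof (induction n)
  case (Suc n)
  then have "step (bead (i + n)) = step (bead (j + n))"
    using bead_Suc by simp
  then show ?case
    using Suc.IH step_inj diamond_end_bead by blast
qed simp

lemma ex_period: "\<exists>p > 0. bead p = start"
proof -
  have "range bead \<subseteq> V"
    using diamond_end_bead diamond_subset_V unfolding diamond_end_def by blast
  then have "\<not> inj bead"
    using finite_V finite_subset finite_imageD[of bead UNIV] by auto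
  then obtain i j where "i < j" "bead i = bead j"
    unfolding inj_def by (metis linorder_neqE_nat)
  then have "bead 0 = bead (j - i)"
    using bead_cancel[of 0 i "j - i"] by simp
  with \<open>i < j\<close> show ?thesis
    using bead_0 by (intro exI[of _ "j - i"]) simp
qed

lemma period_pos: "period > 0"
  and bead_period: "bead period = start"
  using LeastI_ex[OF ex_period] unfolding period_def by blast+

lemma bead_neq_start: "0 < p \<Longrightarrow> p < period \<Longrightarrow> bead p \<noteq> start"
  using not_less_Least[of p "\<lambda>p. p > 0 \<and> bead p = start"] unfolding period_def by blast

lemma bead_add: "bead (i + j) = (step ^^ i) (bead j)"
  unfolding bead_def by (simp add: funpow_add)

lemma bead_add_mult_period: "bead (i + n * period) = bead i"
proof (induction n)
  case (Suc n)
  have "bead (i + Suc n * period) = bead ((i + n * period) + period)"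
    by (simp add: algebra_simps)
  also have "\<dots> = bead (i + n * period)"
    using bead_add[of _ period] bead_period unfolding bead_def by simp
  finally show ?case
    using Suc.IH by simp
qed simp

lemma bead_mod: "bead i = bead (i mod period)"
  using bead_add_mult_period[of "i mod period" "i div period"] by (simp add: mod_div_mult_eq)

lemma bead_inj:
  assumes "i < period" "j < period" "bead i = bead j"
  shows "i = j"
proof (rule ccontr)
  have False if "a < b" "b < period" "bead a = bead b" for a b
  proof -
    have "bead (b - a) = start"
      using bead_cancel[of 0 a "b - a"] that bead_0 by simp
    moreover have "0 < b - a" "b - a < period"
      using that by auto
    ultimately show False
      using bead_neq_start by blast
  qed
  moreover assume "i \<noteq> j"
  ultimately show False
    using assms by (metis linorder_neqE_nat)
qed

lemma period_ge_2: "period \<ge> 2"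
proof (rule ccontr)
  assume "\<not> period \<ge> 2"
  then have "period = 1"
    using period_pos by simp
  then have "bead 1 = start"
    using bead_period by simp
  then have "link (partner start) = start"
    using bead_Suc[of 0] bead_0 unfolding step_def by simp
  then have "link start = partner start"
    using link_link[OF diamond_end_partner[OF diamond_end_start]] by metis
  then show False
    using link_neq(2)[OF diamond_end_start] by simp
qed

text \<open>Since the link and the partner are involutions, a bead i + d meeting the partner of bead i
  could be pulled back to a bead i + 1 + (d - 2) meeting the partner of bead i + 1.\<close>
lemma bead_add_neq_partner: "bead (i + d) \<noteq> partner (bead i)"
proof (induction d arbitrary: i rule: less_induct)
  case (less d)
  consider "d = 0" | "d = 1" | "d \<ge> 2"
    by linarith
  then show ?case
  proof cases
    case 1
    then show ?thesis
      using partner_neq[OF diamond_end_bead[of i]] by auto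
  next
    case 2
    have "bead (i + 1) = link (partner (bead i))"
      using bead_Suc[of i] unfolding step_def by simp
    with 2 show ?thesis
      using link_neq(1)[OF diamond_end_partner[OF diamond_end_bead]] by simp
  next
    case 3
    show ?thesis
    proof
      assume h: "bead (i + d) = partner (bead i)"
      have "bead (i + d) = link (partner (bead (i + d - 1)))"
        using bead_Suc[of "i + d - 1"] 3 unfolding step_def by simp
      then have "partner (bead (i + d - 1)) = link (bead (i + d))"
        using link_link[OF diamond_end_partner[OF diamond_end_bead]] by simp
      also have "\<dots> = bead (i + 1)"
        using h bead_Suc[of i] unfolding step_def by simp
      finally have "bead (i + d - 1) = partner (bead (i + 1))"
        using partner_partner[OF diamond_end_bead] by metis
      moreover have "i + d - 1 = (i + 1) + (d - 2)"
        using 3 by simp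
      ultimately have "bead ((i + 1) + (d - 2)) = partner (bead (i + 1))"
        by simp
      with less[of "d - 2" "i + 1"] 3 show False
        by simp
    qed
  qed
qed

lemma bead_neq_partner: "bead j \<noteq> partner (bead i)"
proof (cases "i \<le> j")
  case True
  then show ?thesis
    using bead_add_neq_partner[of i "j - i"] by simp
next
  case False
  then have "bead i \<noteq> partner (bead j)"
    using bead_add_neq_partner[of j "i - j"] by simp
  then show ?thesis
    using partner_partner[OF diamond_end_bead[of i]] by metis
qed

definition mid1 :: "'a \<Rightarrow> 'a" where
  "mid1 v = fst (middles v)"

definition mid2 :: "'a \<Rightarrow> 'a" where
  "mid2 v = snd (middles v)"

text \<open>Bead i is the vertex b_i of the necklace, its partner is a_i.\<close>
definition necklace_map :: "nat \<times> nat \<Rightarrow> 'a" where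
  "necklace_map u = (if snd u = 0 then partner (bead (fst u)) else if snd u = 1 then bead (fst u)
     else if snd u = 2 then mid1 (bead (fst u)) else mid2 (bead (fst u)))"

lemma diamond_bead: "diamond E (bead i) (partner (bead i)) (mid1 (bead i)) (mid2 (bead i))"
  using diamond_middles[OF diamond_end_bead[of i]] unfolding mid1_def mid2_def .

lemma link_partner_bead: "link (partner (bead i)) = bead ((i + 1) mod period)"
  using bead_Suc[of i] bead_mod[of "Suc i"] unfolding step_def by simp

lemma link_bead:
  assumes "i < period"
  shows "link (bead i) = partner (bead ((i + period - 1) mod period))"
proof -
  have "bead i = bead (Suc (i + period - 1))"
    using bead_add_mult_period[of i 1] period_pos by simp
  also have "\<dots> = link (partner (bead (i + period - 1)))"
    using bead_Suc unfolding step_def by simp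
  finally have "link (bead i) = partner (bead (i + period - 1))"
    using link_link[OF diamond_end_partner[OF diamond_end_bead]] by metis
  then show ?thesis
    using bead_mod[of "i + period - 1"] by simp
qed

lemma end_adj_iff:
  assumes "diamond E v b c d" "diamond_end x" "E v x"
  shows "E v w \<longleftrightarrow> w \<in> {c, d, x}"
proof -
  note A = diamondD[OF assms(1)]
  have "x \<noteq> c" "x \<noteq> d"
    using assms(2) middle_not_end[OF assms(1)] middle_not_end[OF diamond_swap_middles[OF assms(1)]]
    by blast+
  then show ?thesis
    using neighbour_cases[OF A(9,10) assms(3) A(6)] A(9,10) assms(3) by blast
qed

lemma middle_adj_iff: "diamond E a b c d \<Longrightarrow> E c w \<longleftrightarrow> w \<in> {a, b, d}"
  using diamond_middle_neighbour diamondD(13,14,16) by blast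

lemma adj_necklace_map_iff:
  assumes "i < period" "p < 4"
  shows "E (necklace_map (i, p)) w \<longleftrightarrow> w \<in> necklace_map ` necklace_nbrs period (i, p)"
proof -
  note D = diamond_bead[of i] and B = diamond_end_bead[of i]
  consider "p = 0" | "p = 1" | "p = 2" | "p = 3"
    using assms(2) by linarith
  then show ?thesis
  proof cases
    case 1
    have "necklace_map ` necklace_nbrs period (i, p)
        = {mid1 (bead i), mid2 (bead i), bead ((i + 1) mod period)}"
      unfolding 1 necklace_nbrs_def by (auto simp: necklace_map_def)
    moreover have "E (partner (bead i)) w \<longleftrightarrow> w \<in> {mid1 (bead i), mid2 (bead i), link (partner (bead i))}"
      using end_adj_iff[OF diamond_swap_ends[OF D] diamond_end_link link_adj]
        diamond_end_partner[OF B] by blast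
    ultimately show ?thesis
      using 1 link_partner_bead by (simp add: necklace_map_def)
  next
    case 2
    have "necklace_map ` necklace_nbrs period (i, p)
        = {mid1 (bead i), mid2 (bead i), partner (bead ((i + period - 1) mod period))}"
      unfolding 2 necklace_nbrs_def by (auto simp: necklace_map_def)
    moreover have "E (bead i) w \<longleftrightarrow> w \<in> {mid1 (bead i), mid2 (bead i), link (bead i)}"
      using end_adj_iff[OF D diamond_end_link[OF B] link_adj[OF B]] .
    ultimately show ?thesis
      using 2 link_bead[OF assms(1)] by (simp add: necklace_map_def)
  next
    case 3
    have "necklace_map ` necklace_nbrs period (i, p) = {partner (bead i), bead i, mid2 (bead i)}"
      unfolding 3 necklace_nbrs_def by (auto simp: necklace_map_def)
    then show ?thesis
      using 3 middle_adj_iff[OF diamond_swap_ends[OF D]] by (simp add: necklace_map_def)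
  next
    case 4
    have "necklace_map ` necklace_nbrs period (i, p) = {partner (bead i), bead i, mid1 (bead i)}"
      unfolding 4 necklace_nbrs_def by (auto simp: necklace_map_def)
    then show ?thesis
      using 4 middle_adj_iff[OF diamond_swap_middles[OF diamond_swap_ends[OF D]]]
      by (simp add: necklace_map_def)
  qed
qed

lemma necklace_map_in_bead_diamond:
  "p < 4 \<Longrightarrow> necklace_map (i, p) \<in> {bead i, partner (bead i), mid1 (bead i), mid2 (bead i)}"
  unfolding necklace_map_def by auto

lemma bead_diamonds_disjoint:
  assumes "i < period" "j < period"
    and "w \<in> {bead i, partner (bead i), mid1 (bead i), mid2 (bead i)}"
    and "w \<in> {bead j, partner (bead j), mid1 (bead j), mid2 (bead j)}"
  shows "i = j"
proof -
  have "bead j \<in> {bead i, partner (bead i), mid1 (bead i), mid2 (bead i)}"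
    using diamond_vertices_eq[OF diamond_bead[of i] diamond_bead[of j] assms(3,4)] by blast
  moreover have "\<not> diamond_end (mid1 (bead i))" "\<not> diamond_end (mid2 (bead i))"
    using middle_not_end[OF diamond_bead[of i]]
      middle_not_end[OF diamond_swap_middles[OF diamond_bead[of i]]] by blast+
  ultimately have "bead j = bead i \<or> bead j = partner (bead i)"
    using diamond_end_bead[of j] by auto
  then show ?thesis
    using bead_neq_partner[of j i] bead_inj[OF assms(1,2)] by auto
qed

lemma inj_on_necklace_map: "inj_on necklace_map (necklace_V period)"
proof (rule inj_onI)
  fix u v
  assume "u \<in> necklace_V period" "v \<in> necklace_V period" and eq: "necklace_map u = necklace_map v"
  then obtain i p j q where u: "u = (i, p)" "i < period" "p < 4" and v: "v = (j, q)" "j < period" "q < 4"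
    unfolding necklace_V_def by blast
  have "i = j"
    using bead_diamonds_disjoint[OF u(2) v(2) necklace_map_in_bead_diamond[OF u(3)]]
      necklace_map_in_bead_diamond[OF v(3)] eq u(1) v(1) by simp
  moreover have "p = 0 \<or> p = 1 \<or> p = 2 \<or> p = 3" "q = 0 \<or> q = 1 \<or> q = 2 \<or> q = 3"
    using u v by auto
  ultimately have "p = q"
    using eq u(1) v(1) diamondD(1-6)[OF diamond_bead[of i]]
    by (elim disjE) (simp_all add: necklace_map_def)
  with \<open>i = j\<close> u(1) v(1) show "u = v"
    by simp
qed

lemma necklace_nbrs_subset: "i < period \<Longrightarrow> necklace_nbrs period (i, p) \<subseteq> necklace_V period"
  using period_pos unfolding necklace_nbrs_def necklace_V_def Let_def by auto

lemma necklace_map_image: "necklace_map ` necklace_V period = V"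
proof (rule adj_closed_eq_V)
  show "necklace_map ` necklace_V period \<subseteq> V"
  proof
    fix x assume "x \<in> necklace_map ` necklace_V period"
    then obtain i p where "x = necklace_map (i, p)" "p < 4"
      unfolding necklace_V_def by blast
    then show "x \<in> V"
      using necklace_map_in_bead_diamond diamond_subset_V[OF diamond_bead[of i]] by blast
  qed
  show "necklace_map (0, 0) \<in> necklace_map ` necklace_V period"
    using period_pos unfolding necklace_V_def by auto
  fix x y
  assume "x \<in> necklace_map ` necklace_V period" "E x y"
  then obtain i p where "x = necklace_map (i, p)" "i < period" "p < 4" "E x y"
    unfolding necklace_V_def by blast
  then show "y \<in> necklace_map ` necklace_V period"
    using adj_necklace_map_iff necklace_nbrs_subset by blast
qed

lemma iso_necklace: "graph_iso V E (necklace_V period) (necklace_E period)"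
proof -
  let ?N = "necklace_V period"
  let ?f = "inv_into ?N necklace_map"
  have bij: "bij_betw necklace_map ?N V"
    using inj_on_necklace_map necklace_map_image unfolding bij_betw_def by blast
  have "E x y \<longleftrightarrow> necklace_E period (?f x) (?f y)" if "x \<in> V" "y \<in> V" for x y
  proof -
    have f: "?f x \<in> ?N" "necklace_map (?f x) = x" "?f y \<in> ?N" "necklace_map (?f y) = y"
      using that necklace_map_image by (auto intro: inv_into_into f_inv_into_f)
    then obtain i p j q where ip: "?f x = (i, p)" "i < period" "p < 4"
      and jq: "?f y = (j, q)" "j < period" "q < 4"
      unfolding necklace_V_def by blast
    have "E x y \<longleftrightarrow> necklace_map (j, q) \<in> necklace_map ` necklace_nbrs period (i, p)"
      using adj_necklace_map_iff[OF ip(2,3)] f ip(1) jq(1) by metis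
    also have "\<dots> \<longleftrightarrow> (j, q) \<in> necklace_nbrs period (i, p)"
      using inj_on_image_mem_iff[OF inj_on_necklace_map _ necklace_nbrs_subset[OF ip(2)]] f(3) jq(1)
      by metis
    also have "\<dots> \<longleftrightarrow> necklace_E period (i, p) (j, q)"
      using necklace_E_iff[OF ip(2) jq(2) ip(3) jq(3) period_ge_2] by simp
    finally show ?thesis
      using ip(1) jq(1) by simp
  qed
  then show ?thesis
    unfolding graph_iso_def using bij_betw_inv_into[OF bij] by blast
qed

end

context claw_free_cubic
begin

lemma exists_tri_unit:
  assumes "\<forall>k\<ge>2. \<not> graph_iso V E (necklace_V k) (necklace_E k)"
  obtains T where "tri_unit T"
proof -
  have False if "\<nexists>T. tri_unit T"
  proof -
    have "in_diamond v" if "v \<in> V" for v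
      using tri_unit_through[OF that] \<open>\<nexists>T. tri_unit T\<close> by blast
    then interpret all_in_diamonds V E
      by unfold_locales
    show False
      using iso_necklace period_ge_2 assms by blast
  qed
  then show ?thesis
    using that by blast
qed

end

theorem lemma4p2:
  fixes V :: "'a set" and E :: "'a \<Rightarrow> 'a \<Rightarrow> bool"
  assumes "simple_graph V E"
    and "connected_graph V E"
    and "claw_free V E"
    and "cubic V E"
    and "\<not> is_K4 V E"
    and "\<forall>k\<ge>2. \<not> graph_iso V E (necklace_V k) (necklace_E k)"
  shows "\<exists>T. triangle_unit V E T \<and> card (components_minus V E T) \<le> 2"
proof -
  interpret claw_free_cubic V E
    using assms(1-5) by unfold_locales
  obtain T0 where "tri_unit T0"
    using exists_tri_unit[OF assms(6)] .
  then obtain T where "tri_unit T" "card (components_minus V E T) \<le> 2"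
    using tri_unit_with_few_components by blast
  then show ?thesis
    using triangle_unit_if_tri_unit by blast
qed

end
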